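(* Let $\ell\ge 3$ and let $\mathbf{C}$ be a real $\ell\times\ell$ matrix of the following form. Its first row is $(\alpha,\beta',0,\ldots,0,\beta')$ and its first column is $(\alpha,\beta,0,\ldots,0,\beta)^T$. The trailing $(\ell-1)\times(\ell-1)$ block $\mathbf{S}$ (rows and columns $2,\ldots,\ell$ of $\mathbf{C}$, indexed $1,\ldots,\ell-1$) is tridiagonal with - $\mathbf{S}_{k,k}=\alpha_k$ for $1\le k\le \ell-1$, where $\alpha_k=\alpha_{\ell-k}$; - $\mathbf{S}_{k,k+1}=\beta_k$ and $\mathbf{S}_{k+1,k}=\beta_{\ell-1-k}$ for $1\le k\le \ell-2$. Here $\alpha,\beta,\beta',\alpha_k,\beta_k$ are real numbers, so the superdiagonal of $\mathbf{S}$ reads $\beta_1,\ldots,\beta_{\ell-2}$ and the subdiagonal reads $\beta_{\ell-2},\ldots,\beta_1$. Suppose $\beta_k\beta_{\ell-k-1}>0$ for all $1\le k\le \ell-2$ and $\beta\beta'>0$. Then all eigenvalues of $\mathbf{C}$ are real. *)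

theory Defs
  imports Complex_Main "Jordan_Normal_Form.Char_Poly"
begin

end

theory Submission imports Defs begin

text \<open>If positive weights \<open>w\<close> make \<open>W C\<close> symmetric, with \<open>W = diag w\<close>, then \<open>C\<close> is similar to the
  real symmetric matrix \<open>W\<^sup>1\<^sup>/\<^sup>2 C W\<^sup>-\<^sup>1\<^sup>/\<^sup>2\<close>. For the periodic tridiagonal matrix of the theorem such
  weights exist because the paired off-diagonal entries have positive products and the product of
  the entries around the cycle \<open>0 \<rightarrow> 1 \<rightarrow> \<dots> \<rightarrow> l-1 \<rightarrow> 0\<close> equals that around the reverse cycle; the
  latter is where the mirror symmetry of \<open>\<beta>\<^sub>k\<close> enters.\<close>

lemma eigenvalue_real_if_weighted_symmetric:
  fixes C :: "real mat" and w :: "nat \<Rightarrow> real" and z :: complex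
  assumes C: "C \<in> carrier_mat n n"
    and w_pos: "\<And>i. i < n \<Longrightarrow> w i > 0"
    and w_sym: "\<And>i j. i < n \<Longrightarrow> j < n \<Longrightarrow> w i * C $$ (i, j) = w j * C $$ (j, i)"
    and ev: "eigenvalue (map_mat complex_of_real C) z"
  shows "Im z = 0"
proof -
  let ?A = "map_mat complex_of_real C"
  from ev obtain v where v: "v \<in> carrier_vec n" "v \<noteq> 0\<^sub>v n" "?A *\<^sub>v v = z \<cdot>\<^sub>v v"
    unfolding eigenvalue_def eigenvector_def using C by auto
  have Av: "(?A *\<^sub>v v) $ i = (\<Sum>j<n. complex_of_real (C $$ (i, j)) * v $ j)" if "i < n" for i
    using that C v(1) by (auto simp: scalar_prod_def row_def lessThan_atLeast0)
  \<comment> \<open>the weighted quadratic form \<open>Q = v\<^sup>* W C v\<close> is real, and equals \<open>z v\<^sup>* W v\<close> with \<open>v\<^sup>* W v > 0\<close>\<close>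
  define Q where "Q = (\<Sum>i<n. complex_of_real (w i) * cnj (v $ i) * (?A *\<^sub>v v) $ i)"
  define N where "N = (\<Sum>i<n. w i * (cmod (v $ i))\<^sup>2)"
  have "Q = (\<Sum>i<n. complex_of_real (w i) * cnj (v $ i) * (z * v $ i))"
    unfolding Q_def using v(1,3) by (intro sum.cong) auto
  also have "\<dots> = z * complex_of_real N"
    unfolding N_def of_real_sum sum_distrib_left
    by (intro sum.cong refl) (simp add: complex_norm_square[symmetric] mult_ac)
  finally have Q_eq: "Q = z * complex_of_real N" .
  have Q_double: "Q = (\<Sum>i<n. \<Sum>j<n. complex_of_real (w i * C $$ (i, j)) * (cnj (v $ i) * v $ j))"
    unfolding Q_def by (intro sum.cong) (auto simp: Av sum_distrib_left mult_ac)
  have "cnj Q = (\<Sum>i<n. \<Sum>j<n. complex_of_real (w i * C $$ (i, j)) * (v $ i * cnj (v $ j)))"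
    unfolding Q_double by (simp add: mult_ac)
  also have "\<dots> = (\<Sum>j<n. \<Sum>i<n. complex_of_real (w i * C $$ (i, j)) * (v $ i * cnj (v $ j)))"
    by (rule sum.swap)
  also have "\<dots> = Q"
    unfolding Q_double by (intro sum.cong refl) (simp add: w_sym mult_ac)
  finally have "Im Q = 0" by (metis Reals_cnj_iff complex_is_Real_iff)
  hence "Im z * N = 0" using Q_eq by simp
  moreover have "N > 0"
  proof -
    from v(1,2) obtain i where i: "i < n" "v $ i \<noteq> 0" by (auto simp: vec_eq_iff)
    have "0 < w i * (cmod (v $ i))\<^sup>2" using w_pos[OF i(1)] i(2) by simp
    also have "\<dots> \<le> N" unfolding N_def
      using i(1) w_pos by (intro member_le_sum) (auto simp: less_imp_le)
    finally show ?thesis .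
  qed
  ultimately show ?thesis by simp
qed

lemma periodic_tridiagonal_weighted_symmetric:
  fixes C :: "real mat"
  assumes band: "\<And>i j. i < n \<Longrightarrow> j < n \<Longrightarrow> i + 1 < j \<Longrightarrow> \<not> (i = 0 \<and> j = n - 1) \<Longrightarrow>
      C $$ (i, j) = 0 \<and> C $$ (j, i) = 0"
    and pairs_pos: "\<And>j. j + 1 < n \<Longrightarrow> C $$ (j, j + 1) * C $$ (j + 1, j) > 0"
    and cycle: "(\<Prod>j<n - 1. C $$ (j, j + 1)) * C $$ (n - 1, 0)
      = (\<Prod>j<n - 1. C $$ (j + 1, j)) * C $$ (0, n - 1)"
  obtains w where "\<And>i. i < n \<Longrightarrow> w i > 0"
    and "\<And>i j. i < n \<Longrightarrow> j < n \<Longrightarrow> w i * C $$ (i, j) = w j * C $$ (j, i)"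
proof
  define w where "w k = (\<Prod>j<k. C $$ (j, j + 1) / C $$ (j + 1, j))" for k
  have sub_nz: "C $$ (j + 1, j) \<noteq> 0" if "j + 1 < n" for j
    using pairs_pos[OF that] by auto
  show w_pos: "w i > 0" if "i < n" for i
    unfolding w_def using that pairs_pos
    by (intro prod_pos) (auto simp: zero_less_divide_iff zero_less_mult_iff)
  have step: "w i * C $$ (i, i + 1) = w (i + 1) * C $$ (i + 1, i)" if "i + 1 < n" for i
    unfolding w_def using sub_nz[OF that] by simp
  have wrap: "w 0 * C $$ (0, n - 1) = w (n - 1) * C $$ (n - 1, 0)"
  proof -
    define up where "up = (\<Prod>j<n - 1. C $$ (j, j + 1))"
    define down where "down = (\<Prod>j<n - 1. C $$ (j + 1, j))"
    have "down \<noteq> 0" unfolding down_def using sub_nz by simp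
    have "w (n - 1) * C $$ (n - 1, 0) = up * C $$ (n - 1, 0) / down"
      unfolding w_def up_def down_def by (simp add: prod_dividef)
    also have "\<dots> = C $$ (0, n - 1)"
      using cycle \<open>down \<noteq> 0\<close> unfolding up_def down_def by (simp add: mult.commute)
    finally show ?thesis by (simp add: w_def)
  qed
  have upper: "w i * C $$ (i, j) = w j * C $$ (j, i)" if ij: "i < j" "j < n" for i j
  proof -
    consider "j = i + 1" | "i = 0" "j = n - 1" | "i + 1 < j" "\<not> (i = 0 \<and> j = n - 1)"
      using ij by (cases "j = i + 1") auto
    thus ?thesis
    proof cases
      case 1 thus ?thesis using step ij by auto
    next
      case 2 thus ?thesis using wrap by simp
    next
      case 3 thus ?thesis using band[of i j] ij by simp
    qed
  qed
  show "w i * C $$ (i, j) = w j * C $$ (j, i)" if "i < n" "j < n" for i j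
    using upper[of i j] upper[of j i] that by (cases i j rule: linorder_cases) auto
qed

theorem lemmaA2:
  fixes l :: nat and C :: "real mat"
    and \<alpha> \<beta> \<beta>' :: real and a b :: "nat \<Rightarrow> real"
  assumes l3: "l \<ge> 3"
    and dimC: "C \<in> carrier_mat l l"
    and C00: "C $$ (0, 0) = \<alpha>"
    and row0: "C $$ (0, 1) = \<beta>'" "C $$ (0, l - 1) = \<beta>'"
      "\<forall>j. 1 < j \<and> j < l - 1 \<longrightarrow> C $$ (0, j) = 0"
    and col0: "C $$ (1, 0) = \<beta>" "C $$ (l - 1, 0) = \<beta>"
      "\<forall>i. 1 < i \<and> i < l - 1 \<longrightarrow> C $$ (i, 0) = 0"
    and diag: "\<forall>k. 1 \<le> k \<and> k \<le> l - 1 \<longrightarrow> C $$ (k, k) = a k"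
    and diag_sym: "\<forall>k. 1 \<le> k \<and> k \<le> l - 1 \<longrightarrow> a k = a (l - k)"
    and offdiag: "\<forall>k. 1 \<le> k \<and> k \<le> l - 2 \<longrightarrow>
        C $$ (k, k + 1) = b k \<and> C $$ (k + 1, k) = b (l - 1 - k)"
    and tridiag: "\<forall>i j. 1 \<le> i \<and> i < l \<and> 1 \<le> j \<and> j < l \<and> (i + 1 < j \<or> j + 1 < i)
        \<longrightarrow> C $$ (i, j) = 0"
    and bpos: "\<forall>k. 1 \<le> k \<and> k \<le> l - 2 \<longrightarrow> b k * b (l - k - 1) > 0"
    and \<beta>pos: "\<beta> * \<beta>' > 0"
  shows "\<forall>z::complex. eigenvalue (map_mat complex_of_real C) z \<longrightarrow> Im z = 0"
proof -
  have band: "C $$ (i, j) = 0 \<and> C $$ (j, i) = 0"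
    if "i + 1 < j" "j < l" "\<not> (i = 0 \<and> j = l - 1)" for i j
    using that row0(3) col0(3) tridiag by (cases "i = 0") auto
  have pairs_pos: "C $$ (j, j + 1) * C $$ (j + 1, j) > 0" if "j + 1 < l" for j
  proof (cases "j = 0")
    case True thus ?thesis using row0 col0 \<beta>pos by (simp add: mult.commute)
  next
    case False
    hence "1 \<le> j \<and> j \<le> l - 2" and "l - 1 - j = l - j - 1" using that by auto
    thus ?thesis using offdiag bpos by metis
  qed
  have split: "(\<Prod>j<l - 1. f j) = f 0 * (\<Prod>j=1..l - 2. f j)" for f :: "nat \<Rightarrow> real"
  proof -
    have "{..<l - 1} = insert 0 {1..l - 2}" using l3 by auto
    thus ?thesis by simp
  qed
  have reflect: "(\<Prod>j=1..l - 2. b (l - 1 - j)) = (\<Prod>j=1..l - 2. b j)"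
    using prod.atLeastAtMost_rev[of b 1 "l - 2"] l3 by (simp add: Suc_diff_Suc numeral_2_eq_2)
  have up: "(\<Prod>j<l - 1. C $$ (j, j + 1)) = \<beta>' * (\<Prod>j=1..l - 2. b j)"
    unfolding split using row0(1) offdiag by (auto intro!: prod.cong)
  have down: "(\<Prod>j<l - 1. C $$ (j + 1, j)) = \<beta> * (\<Prod>j=1..l - 2. b j)"
    unfolding split reflect[symmetric] using col0(1) offdiag by (auto intro!: prod.cong)
  have cycle: "(\<Prod>j<l - 1. C $$ (j, j + 1)) * C $$ (l - 1, 0)
      = (\<Prod>j<l - 1. C $$ (j + 1, j)) * C $$ (0, l - 1)"
    unfolding up down using row0(2) col0(2) by simp
  obtain w where "\<And>i. i < l \<Longrightarrow> w i > 0"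
    and "\<And>i j. i < l \<Longrightarrow> j < l \<Longrightarrow> w i * C $$ (i, j) = w j * C $$ (j, i)"
    using periodic_tridiagonal_weighted_symmetric[of l C] band pairs_pos cycle by blast
  thus ?thesis using eigenvalue_real_if_weighted_symmetric[OF dimC] by blast
qed

end
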